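(* Let $A_1,A_2\in\mathbf{C}^{n\times n}$, $B_1,B_2\in\mathbf{C}^{n\times m}$, and consider the system equation $$x^+=A_1x+A_2^{\#}x^{\#}+B_1u+B_2^{\#}u^{\#},\qquad x(0)=x_0,$$ where $x^+(t)=\dot x(t)$ for $t\in\mathbf{R}^+=[0,\infty)$ (continuous time) and $x^+(t)=x(t+1)$ for $t\in\mathbf{Z}^+=\{0,1,2,\dots\}$ (discrete time). For any $x_0\in\mathbf{C}^n$ and any input $u(t)\in\mathbf{C}^m$ (locally integrable in the continuous-time case), this equation has the unique solution $$x(t)=\mathrm{e}^{t\{A_1,A_2\}}x_0+\int_0^t\mathrm{e}^{(t-s)\{A_1,A_2\}}\{B_1,B_2\}u(s)\,\mathrm{d}s,\quad t\in\mathbf{R}^+,$$ $$x(t)=\{A_1,A_2\}^tx_0+\sum_{i=0}^{t-1}\{A_1,A_2\}^{t-1-i}\{B_1,B_2\}u(i),\quad 1\le t\in\mathbf{Z}^+,$$ and equivalently $$x(t)=\{\Phi_1(t),\Phi_2(t)\}x_0+\int_0^t\{\Phi_1(t-s),\Phi_2(t-s)\}\{B_1,B_2\}u(s)\,\mathrm{d}s,\quad t\in\mathbf{R}^+,$$ $$x(t)=\{\Phi_1(t),\Phi_2(t)\}x_0+\sum_{i=0}^{t-1}\{\Phi_1(t-1-i),\Phi_2(t-1-i)\}\{B_1,B_2\}u(i),\quad 1\le t\in\mathbf{Z}^+,$$ where $\begin{bmatrix}\Phi_1(t)\\ \Phi_2(t)\end{bmatrix}=\mathrm{e}^{t\{A_1,A_2\}_\diamond}\begin{bmatrix}I_n\\0\end{bmatrix}$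 for $t\in\mathbf{R}^+$ and $=\left(\{A_1,A_2\}_\diamond\right)^t\begin{bmatrix}I_n\\0\end{bmatrix}$ for $t\in\mathbf{Z}^+$.
   Context: $P^{\#}$ denotes entrywise conjugate. For matrices $A_1,A_2$ of equal size, the bimatrix $\{A_1,A_2\}$ is the real-linear map $x\mapsto A_1x+A_2^{\#}x^{\#}$; products of bimatrices are compositions. Powers: $\{A_1,A_2\}^0=\{I_n,0\}$ (identity), $\{A_1,A_2\}^i=\{A_1,A_2\}\{A_1,A_2\}^{i-1}$. Exponent: $\mathrm{e}^{t\{A_1,A_2\}}=\sum_{i=0}^\infty\frac{t^i}{i!}\{A_1,A_2\}^i$ (applied pointwise to vectors). Complex lifting: $\{A_1,A_2\}_\diamond=\begin{bmatrix}A_1 & A_2^{\#}\\ A_2 & A_1^{\#}\end{bmatrix}$. *)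

theory Defs
  imports "HOL-Analysis.Analysis"
begin

definition vconj :: "complex ^ 'n \<Rightarrow> complex ^ 'n" where
  "vconj x = (\<chi> i. cnj (x $ i))"

definition mconj :: "complex ^ 'm ^ 'n \<Rightarrow> complex ^ 'm ^ 'n" where
  "mconj A = (\<chi> i j. cnj (A $ i $ j))"

text \<open>The bimatrix {A1,A2} as the real-linear map x |-> A1 x + A2^# x^#.\<close>
definition bimat :: "complex ^ 'm ^ 'n \<Rightarrow> complex ^ 'm ^ 'n \<Rightarrow> complex ^ 'm \<Rightarrow> complex ^ 'n" where
  "bimat A1 A2 x = A1 *v x + mconj A2 *v vconj x"

definition bipow :: "complex ^ 'n ^ 'n \<Rightarrow> complex ^ 'n ^ 'n \<Rightarrow> nat \<Rightarrow> complex ^ 'n \<Rightarrow> complex ^ 'n" where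
  "bipow A1 A2 i = (bimat A1 A2 ^^ i)"

definition biexp :: "real \<Rightarrow> complex ^ 'n ^ 'n \<Rightarrow> complex ^ 'n ^ 'n \<Rightarrow> complex ^ 'n \<Rightarrow> complex ^ 'n" where
  "biexp t A1 A2 x = (\<Sum>i. (t ^ i / fact i) *\<^sub>R bipow A1 A2 i x)"

text \<open>Complex lifting {A1,A2}_diamond, a 2n x 2n matrix indexed by 'n + 'n
  (Inl = first block, Inr = second block).\<close>
definition lift :: "complex ^ 'n ^ 'n \<Rightarrow> complex ^ 'n ^ 'n \<Rightarrow> complex ^ ('n + 'n) ^ ('n + 'n)" where
  "lift A1 A2 = (\<chi> r c. case r of
       Inl i \<Rightarrow> (case c of Inl j \<Rightarrow> A1 $ i $ j | Inr j \<Rightarrow> cnj (A2 $ i $ j))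
     | Inr i \<Rightarrow> (case c of Inl j \<Rightarrow> A2 $ i $ j | Inr j \<Rightarrow> cnj (A1 $ i $ j)))"

definition matpow :: "'a::comm_ring_1 ^ 'k ^ 'k \<Rightarrow> nat \<Rightarrow> 'a ^ 'k ^ 'k" where
  "matpow M i = (((**) M) ^^ i) (mat 1)"

definition matexp :: "real \<Rightarrow> complex ^ 'k ^ 'k \<Rightarrow> complex ^ 'k ^ 'k" where
  "matexp t M = (\<Sum>i. (t ^ i / fact i) *\<^sub>R matpow M i)"

text \<open>[Phi1;Phi2] = N [I;0] : Phi1 is the (Inl,Inl) block, Phi2 the (Inr,Inl) block.\<close>
definition blk1 :: "complex ^ ('n + 'n) ^ ('n + 'n) \<Rightarrow> complex ^ 'n ^ 'n" where
  "blk1 N = (\<chi> i j. N $ Inl i $ Inl j)"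

definition blk2 :: "complex ^ ('n + 'n) ^ ('n + 'n) \<Rightarrow> complex ^ 'n ^ 'n" where
  "blk2 N = (\<chi> i j. N $ Inr i $ Inl j)"

definition PhiC1 :: "complex ^ 'n ^ 'n \<Rightarrow> complex ^ 'n ^ 'n \<Rightarrow> real \<Rightarrow> complex ^ 'n ^ 'n" where
  "PhiC1 A1 A2 t = blk1 (matexp t (lift A1 A2))"
definition PhiC2 :: "complex ^ 'n ^ 'n \<Rightarrow> complex ^ 'n ^ 'n \<Rightarrow> real \<Rightarrow> complex ^ 'n ^ 'n" where
  "PhiC2 A1 A2 t = blk2 (matexp t (lift A1 A2))"
definition PhiD1 :: "complex ^ 'n ^ 'n \<Rightarrow> complex ^ 'n ^ 'n \<Rightarrow> nat \<Rightarrow> complex ^ 'n ^ 'n" where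
  "PhiD1 A1 A2 t = blk1 (matpow (lift A1 A2) t)"
definition PhiD2 :: "complex ^ 'n ^ 'n \<Rightarrow> complex ^ 'n ^ 'n \<Rightarrow> nat \<Rightarrow> complex ^ 'n ^ 'n" where
  "PhiD2 A1 A2 t = blk2 (matpow (lift A1 A2) t)"

text \<open>Continuous-time solution (Caratheodory sense, integral form) on [0,inf).\<close>
definition csol :: "complex ^ 'n ^ 'n \<Rightarrow> complex ^ 'n ^ 'n \<Rightarrow> complex ^ 'm ^ 'n \<Rightarrow> complex ^ 'm ^ 'n
    \<Rightarrow> complex ^ 'n \<Rightarrow> (real \<Rightarrow> complex ^ 'm) \<Rightarrow> (real \<Rightarrow> complex ^ 'n) \<Rightarrow> bool" where
  "csol A1 A2 B1 B2 x0 u x \<longleftrightarrow>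
     (\<forall>t\<ge>0. ((\<lambda>s. bimat A1 A2 (x s) + bimat B1 B2 (u s)) has_integral (x t - x0)) {0..t})"

definition dsol :: "complex ^ 'n ^ 'n \<Rightarrow> complex ^ 'n ^ 'n \<Rightarrow> complex ^ 'm ^ 'n \<Rightarrow> complex ^ 'm ^ 'n
    \<Rightarrow> complex ^ 'n \<Rightarrow> (nat \<Rightarrow> complex ^ 'm) \<Rightarrow> (nat \<Rightarrow> complex ^ 'n) \<Rightarrow> bool" where
  "dsol A1 A2 B1 B2 x0 u x \<longleftrightarrow>
     x 0 = x0 \<and> (\<forall>t. x (Suc t) = bimat A1 A2 (x t) + bimat B1 B2 (u t))"

end

theory Submission
  imports Defs
begin

(* The bimatrix {A1,A2} is a real-linear map F on C^n, so both systems are linear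
   equations x+ = F x + g in a finite-dimensional real space.  In continuous time the exponential
   of F is a convergent power series whose derivative in t is F applied to it; exchanging
   the order of integration over the triangle 0 <= r <= s <= t then shows that the
   variation-of-constants (Duhamel) formula solves the integral equation, and uniqueness
   follows by Picard iteration: the difference d of two solutions satisfies
   |d t| <= M (K t)^n / n! for all n.  The Phi-forms hold because the lifting
   {A1,A2}_diamond acts on the stacked vector [v; v#] exactly as {A1,A2} acts on v, and
   this block pattern is preserved by products, hence by powers and the exponential. *)

section \<open>Exponential of a bounded linear map\<close>

definition lin_exp :: "('a::real_normed_vector \<Rightarrow> 'a) \<Rightarrow> real \<Rightarrow> 'a \<Rightarrow> 'a" where
  "lin_exp F t w = (\<Sum>i. (t ^ i / fact i) *\<^sub>R (F ^^ i) w)"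

lemma bounded_linear_funpow:
  fixes F :: "'a::real_normed_vector \<Rightarrow> 'a"
  assumes "bounded_linear F"
  shows "bounded_linear (F ^^ i)"
proof (induction i)
  case (Suc i)
  then show ?case
    using bounded_linear_compose[OF assms Suc.IH] by (simp add: comp_def)
qed (simp add: id_def)

lemma norm_funpow_le:
  fixes F :: "'a::real_normed_vector \<Rightarrow> 'a"
  assumes "\<And>x. norm (F x) \<le> norm x * K" "0 \<le> K"
  shows "norm ((F ^^ i) w) \<le> K ^ i * norm w"
proof (induction i)
  case (Suc i)
  have "norm ((F ^^ Suc i) w) \<le> K * norm ((F ^^ i) w)" using assms(1) by (simp add: mult.commute)
  also have "\<dots> \<le> K * (K ^ i * norm w)" using Suc assms(2) by (intro mult_left_mono)
  finally show ?case by simp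
qed simp

lemma norm_lin_exp_term_le:
  fixes F :: "'a::real_normed_vector \<Rightarrow> 'a"
  assumes "\<And>x. norm (F x) \<le> norm x * K" "0 \<le> K"
  shows "norm ((t ^ i / fact i) *\<^sub>R (F ^^ i) w) \<le> norm w * ((\<bar>t\<bar> * K) ^ i / fact i)"
proof -
  have "norm ((t ^ i / fact i) *\<^sub>R (F ^^ i) w) = (\<bar>t\<bar> ^ i / fact i) * norm ((F ^^ i) w)"
    by (simp add: power_abs)
  also have "\<dots> \<le> (\<bar>t\<bar> ^ i / fact i) * (K ^ i * norm w)"
    by (intro mult_left_mono norm_funpow_le[OF assms]) auto
  finally show ?thesis by (simp add: power_mult_distrib power_abs mult_ac)
qed

lemma summable_exp_scaled: "summable (\<lambda>i. c * (x ^ i / fact i :: real))"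
  using summable_exp[of x] by (intro summable_mult) (simp add: field_simps)

lemma summable_norm_lin_exp_series:
  fixes F :: "'a::real_normed_vector \<Rightarrow> 'a"
  assumes "\<And>x. norm (F x) \<le> norm x * K" "0 \<le> K"
  shows "summable (\<lambda>i. norm ((t ^ i / fact i) *\<^sub>R (F ^^ i) w))"
  by (rule summable_comparison_test[OF _ summable_exp_scaled])
     (use norm_lin_exp_term_le[OF assms] in auto)

lemma summable_lin_exp_series:
  fixes F :: "'a::banach \<Rightarrow> 'a"
  assumes "bounded_linear F"
  shows "summable (\<lambda>i. (t ^ i / fact i) *\<^sub>R (F ^^ i) w)"
proof -
  obtain K where "\<And>x. norm (F x) \<le> norm x * K" "0 \<le> K"
    using bounded_linear.nonneg_bounded[OF assms] by blast
  then show ?thesis by (rule summable_norm_cancel[OF summable_norm_lin_exp_series])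
qed

lemma norm_lin_exp_le:
  fixes F :: "'a::banach \<Rightarrow> 'a"
  assumes "\<And>x. norm (F x) \<le> norm x * K" "0 \<le> K"
  shows "norm (lin_exp F t w) \<le> exp (\<bar>t\<bar> * K) * norm w"
proof -
  have "norm (lin_exp F t w) \<le> (\<Sum>i. norm ((t ^ i / fact i) *\<^sub>R (F ^^ i) w))"
    unfolding lin_exp_def by (rule summable_norm[OF summable_norm_lin_exp_series[OF assms]])
  also have "\<dots> \<le> (\<Sum>i. norm w * ((\<bar>t\<bar> * K) ^ i / fact i))"
    by (intro suminf_le norm_lin_exp_term_le[OF assms] summable_norm_lin_exp_series[OF assms]
        summable_exp_scaled)
  also have "\<dots> = norm w * exp (\<bar>t\<bar> * K)"
    by (subst suminf_mult) (use summable_exp[of "\<bar>t\<bar> * K"] in \<open>auto simp: exp_def field_simps\<close>)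
  finally show ?thesis by (simp add: mult.commute)
qed

lemma bounded_linear_lin_exp:
  fixes F :: "'a::banach \<Rightarrow> 'a"
  assumes F: "bounded_linear F"
  shows "bounded_linear (lin_exp F t)"
proof -
  obtain K where K: "\<And>x. norm (F x) \<le> norm x * K" "0 \<le> K"
    using bounded_linear.nonneg_bounded[OF F] by blast
  have add: "lin_exp F t (v + w) = lin_exp F t v + lin_exp F t w" for v w
    unfolding lin_exp_def
    by (simp add: suminf_add[OF summable_lin_exp_series[OF F] summable_lin_exp_series[OF F]]
        linear_simps(1)[OF bounded_linear_funpow[OF F]] scaleR_add_right)
  have scale: "lin_exp F t (c *\<^sub>R v) = c *\<^sub>R lin_exp F t v" for c v
    unfolding lin_exp_def
    by (simp add: bounded_linear.suminf[OF bounded_linear_scaleR_right summable_lin_exp_series[OF F]]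
        linear_simps(5)[OF bounded_linear_funpow[OF F]] scaleR_left_commute mult.commute)
  show ?thesis
    by (rule bounded_linear_intro[where K = "exp (\<bar>t\<bar> * K)"])
       (use add scale norm_lin_exp_le[OF K] in \<open>auto simp: mult.commute\<close>)
qed

lemma lin_exp_commute:
  fixes F :: "'a::banach \<Rightarrow> 'a"
  assumes "bounded_linear F"
  shows "F (lin_exp F t w) = lin_exp F t (F w)"
  unfolding lin_exp_def
  by (simp add: bounded_linear.suminf[OF assms summable_lin_exp_series[OF assms]]
      linear_simps(5)[OF assms] funpow_swap1)

lemma lin_exp_0 [simp]: "lin_exp F 0 w = w"
proof -
  have "(\<lambda>i. ((0::real) ^ i / fact i) *\<^sub>R (F ^^ i) w) sums w"
    using sums_finite[of "{0}" "\<lambda>i. ((0::real) ^ i / fact i) *\<^sub>R (F ^^ i) w"]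
    by (auto simp: power_0_left)
  then show ?thesis unfolding lin_exp_def by (simp add: sums_iff)
qed

lemma has_vector_derivative_lin_exp:
  fixes F :: "'a::euclidean_space \<Rightarrow> 'a"
  assumes F: "bounded_linear F"
  shows "((\<lambda>t. lin_exp F t w) has_vector_derivative lin_exp F t (F w)) (at t)"
proof -
  have coord: "lin_exp F y v \<bullet> b = (\<Sum>i. ((F ^^ i) v \<bullet> b) / fact i * y ^ i)" for y v b
    unfolding lin_exp_def
    by (subst bounded_linear.suminf[OF bounded_linear_inner_left summable_lin_exp_series[OF F]])
       (simp add: field_simps)
  have "((\<lambda>t. lin_exp F t w \<bullet> b) has_field_derivative (lin_exp F t (F w) \<bullet> b)) (at t)" for b
  proof -
    define c where "c n = ((F ^^ n) w \<bullet> b) / fact n" for n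
    have "summable (\<lambda>n. c n * y ^ n)" for y
      using bounded_linear.summable[OF bounded_linear_inner_left summable_lin_exp_series[OF F, of y w], of b]
      by (simp add: c_def field_simps)
    then have "((\<lambda>y. \<Sum>n. c n * y ^ n) has_field_derivative (\<Sum>n. diffs c n * t ^ n)) (at t)"
      by (rule termdiffs_strong_converges_everywhere)
    moreover have "diffs c n = ((F ^^ n) (F w) \<bullet> b) / fact n" for n
      by (simp add: diffs_def c_def funpow_Suc_right del: funpow.simps)
    ultimately show ?thesis by (simp add: coord c_def)
  qed
  then have "((\<lambda>t. \<Sum>b\<in>Basis. (lin_exp F t w \<bullet> b) *\<^sub>R b) has_vector_derivative
          (\<Sum>b\<in>Basis. (lin_exp F t (F w) \<bullet> b) *\<^sub>R b)) (at t)"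
    by (intro has_vector_derivative_sum has_vector_derivative_scaleR[of _ _ _ _ "\<lambda>_. _" 0, simplified])
  then show ?thesis by (simp add: euclidean_representation)
qed

lemma continuous_on_lin_exp:
  fixes F :: "'a::euclidean_space \<Rightarrow> 'a"
  assumes "bounded_linear F"
  shows "continuous_on S (\<lambda>t. lin_exp F t w)"
  by (intro continuous_at_imp_continuous_on ballI has_derivative_continuous)
     (use has_vector_derivative_lin_exp[OF assms] in \<open>auto simp: has_vector_derivative_def\<close>)

lemma has_vector_derivative_lin_exp_shift:
  fixes F :: "'a::euclidean_space \<Rightarrow> 'a"
  assumes "bounded_linear F"
  shows "((\<lambda>s. lin_exp F (s - r) w) has_vector_derivative lin_exp F (s - r) (F w)) (at s within S)"
proof -
  have "(((\<lambda>t. lin_exp F t w) \<circ> (\<lambda>s. s - r)) has_vector_derivative 1 *\<^sub>R lin_exp F (s - r) (F w))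
      (at s within S)"
    by (intro vector_diff_chain_within has_vector_derivative_at_within[OF has_vector_derivative_lin_exp[OF assms]])
       (auto intro!: derivative_eq_intros)
  then show ?thesis by (simp add: comp_def)
qed

lemma has_integral_lin_exp:
  fixes F :: "'a::euclidean_space \<Rightarrow> 'a"
  assumes "bounded_linear F" "r \<le> t"
  shows "((\<lambda>s. lin_exp F (s - r) (F w)) has_integral (lin_exp F (t - r) w - w)) {r..t}"
proof -
  have "((\<lambda>s. lin_exp F (s - r) (F w)) has_integral (lin_exp F (t - r) w - lin_exp F (r - r) w)) {r..t}"
    by (intro fundamental_theorem_of_calculus assms(2) has_vector_derivative_lin_exp_shift assms(1))
  then show ?thesis by simp
qed

section \<open>Fubini over a triangle\<close>

lemma sigma_finite_lebesgue: "sigma_finite_measure (lebesgue :: 'a::euclidean_space measure)"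
proof
  obtain A :: "'a set set" where A: "countable A \<and> A \<subseteq> sets lborel \<and> \<Union> A = space lborel \<and>
      (\<forall>a\<in>A. emeasure lborel a \<noteq> \<infinity>)"
    using lborel.sigma_finite_countable by (rule exE)
  show "\<exists>A. countable A \<and> A \<subseteq> sets (lebesgue :: 'a measure) \<and> \<Union> A = space lebesgue \<and>
      (\<forall>a\<in>A. emeasure lebesgue a \<noteq> \<infinity>)"
    by (rule exI[of _ A]) (use A in auto)
qed

interpretation lebesgue_pair: pair_sigma_finite "lebesgue :: real measure" "lebesgue :: real measure"
  by (simp add: pair_sigma_finite_def sigma_finite_lebesgue)

lemma measurable_fst_lebesgue [measurable]:
  "fst \<in> borel_measurable (lebesgue \<Otimes>\<^sub>M (lebesgue :: real measure))"
  by (rule measurable_compose[OF measurable_fst]) (simp add: measurable_completion)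

lemma measurable_snd_lebesgue [measurable]:
  "snd \<in> borel_measurable ((lebesgue :: real measure) \<Otimes>\<^sub>M lebesgue)"
  by (rule measurable_compose[OF measurable_snd]) (simp add: measurable_completion)

definition triangle :: "real \<Rightarrow> (real \<times> real) set" where
  "triangle T = {(s, r). 0 \<le> r \<and> r \<le> s \<and> s \<le> T}"

lemma triangle_sets: "triangle T \<in> sets (lebesgue \<Otimes>\<^sub>M lebesgue)"
proof -
  have "triangle T = {p \<in> space (lebesgue \<Otimes>\<^sub>M lebesgue). 0 \<le> snd p \<and> snd p \<le> fst p \<and> fst p \<le> T}"
    by (auto simp: triangle_def space_pair_measure)
  also have "\<dots> \<in> sets (lebesgue \<Otimes>\<^sub>M lebesgue)"
    by measurable
  finally show ?thesis .
qed

lemma lebesgue_integral_indicator_eq_integral: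
  fixes h :: "'a::euclidean_space \<Rightarrow> 'b::euclidean_space"
  assumes meas: "(\<lambda>x. indicator S x *\<^sub>R h x) \<in> borel_measurable lebesgue"
    and B: "integrable lebesgue B" and bound: "\<And>x. x \<in> S \<Longrightarrow> norm (h x) \<le> B x"
  shows "(\<integral>x. indicator S x *\<^sub>R h x \<partial>lebesgue) = integral S h"
proof -
  have "integrable lebesgue (\<lambda>x. indicator S x *\<^sub>R h x)"
    by (rule Bochner_Integration.integrable_bound[OF B meas], rule AE_I2)
       (auto simp: indicator_def intro: order_trans[OF bound])
  then have "set_integrable lebesgue S h"
    by (simp add: set_integrable_def)
  then show ?thesis
    using set_lebesgue_integral_eq_integral(2) by (simp add: set_lebesgue_integral_def)
qed

context
  fixes k :: "real \<Rightarrow> real \<Rightarrow> 'b::euclidean_space" and g :: "real \<Rightarrow> 'c::euclidean_space"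
    and T C :: real
  assumes g: "g absolutely_integrable_on {0..T}"
    and meas: "(\<lambda>p. indicator {0..T} (snd p) *\<^sub>R k (fst p) (snd p)) \<in> borel_measurable (lebesgue \<Otimes>\<^sub>M lebesgue)"
    and bound: "\<And>s r. 0 \<le> r \<Longrightarrow> r \<le> s \<Longrightarrow> s \<le> T \<Longrightarrow> norm (k s r) \<le> C * norm (g r)"
begin

private definition cut_kernel :: "real \<Rightarrow> real \<Rightarrow> 'b" where
  "cut_kernel s r = indicator (triangle T) (s, r) *\<^sub>R k s r"

private lemma integrable_norm_g: "integrable lebesgue (\<lambda>r. \<bar>C\<bar> * norm (indicator {0..T} r *\<^sub>R g r))"
  using g by (intro integrable_mult_right integrable_norm) (simp add: set_integrable_def)

private lemma integrable_indicator_T: "integrable lebesgue (\<lambda>s. indicator {0..T} s * (c::real))"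
  by (intro integrable_mult_left integrable_real_indicator) (auto simp: emeasure_lborel_Icc_eq)

private lemma norm_kernel_le: "0 \<le> r \<Longrightarrow> r \<le> s \<Longrightarrow> s \<le> T \<Longrightarrow> norm (k s r) \<le> \<bar>C\<bar> * norm (g r)"
  using bound[of r s] by (smt (verit) mult_right_mono norm_ge_zero)

private lemma cut_kernel_measurable: "case_prod cut_kernel \<in> borel_measurable (lebesgue \<Otimes>\<^sub>M lebesgue)"
proof -
  have "case_prod cut_kernel =
      (\<lambda>p. indicator (triangle T) p *\<^sub>R (indicator {0..T} (snd p) *\<^sub>R k (fst p) (snd p)))"
    by (auto simp: fun_eq_iff cut_kernel_def triangle_def indicator_def)
  then show ?thesis
    using borel_measurable_scaleR[OF borel_measurable_indicator[OF triangle_sets] meas] by simp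
qed

private lemma cut_kernel_integrable: "integrable (lebesgue \<Otimes>\<^sub>M lebesgue) (case_prod cut_kernel)"
proof -
  define G where "G p = indicator {0..T} (fst p) * (\<bar>C\<bar> * norm (indicator {0..T} (snd p) *\<^sub>R g (snd p)))"
    for p :: "real \<times> real"
  have gm: "(\<lambda>r. indicator {0..T} r *\<^sub>R g r) \<in> borel_measurable lebesgue"
    using g by (simp add: set_integrable_def borel_measurable_integrable)
  have GI: "integrable (lebesgue \<Otimes>\<^sub>M lebesgue) G"
  proof (rule lebesgue_pair.Fubini_integrable)
    show "G \<in> borel_measurable (lebesgue \<Otimes>\<^sub>M lebesgue)"
      unfolding G_def using gm by measurable
    have "(\<lambda>s. \<integral>r. norm (G (s, r)) \<partial>lebesgue)
        = (\<lambda>s. indicator {0..T} s * (\<integral>r. \<bar>C\<bar> * norm (indicator {0..T} r *\<^sub>R g r) \<partial>lebesgue))"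
      by (simp add: fun_eq_iff G_def abs_mult)
    then show "integrable lebesgue (\<lambda>s. \<integral>r. norm (G (s, r)) \<partial>lebesgue)"
      by (simp only: integrable_indicator_T)
    show "AE s in lebesgue. integrable lebesgue (\<lambda>r. G (s, r))"
      unfolding G_def using integrable_norm_g by (intro AE_I2 integrable_mult_right) simp
  qed
  show ?thesis
    by (rule Bochner_Integration.integrable_bound[OF GI cut_kernel_measurable], rule AE_I2)
       (auto simp: G_def cut_kernel_def triangle_def indicator_def norm_kernel_le)
qed

private lemma cut_kernel_section_fst:
  "(\<integral>r. cut_kernel s r \<partial>lebesgue) = indicator {0..T} s *\<^sub>R integral {0..s} (k s)"
proof (cases "0 \<le> s \<and> s \<le> T")
  case True
  then have eq: "cut_kernel s r = indicator {0..s} r *\<^sub>R k s r" for r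
    by (auto simp: cut_kernel_def triangle_def indicator_def)
  have "(\<integral>r. indicator {0..s} r *\<^sub>R k s r \<partial>lebesgue) = integral {0..s} (k s)"
    using measurable_Pair2[OF cut_kernel_measurable, of s] True
    by (intro lebesgue_integral_indicator_eq_integral[OF _ integrable_norm_g])
       (auto simp: eq norm_kernel_le)
  then show ?thesis using True by (simp add: eq)
qed (auto simp: cut_kernel_def triangle_def)

private lemma cut_kernel_section_snd:
  "(\<integral>s. cut_kernel s r \<partial>lebesgue) = indicator {0..T} r *\<^sub>R integral {r..T} (\<lambda>s. k s r)"
proof (cases "0 \<le> r \<and> r \<le> T")
  case True
  then have eq: "cut_kernel s r = indicator {r..T} s *\<^sub>R k s r" for s
    by (auto simp: cut_kernel_def triangle_def indicator_def)
  have "(\<integral>s. indicator {r..T} s *\<^sub>R k s r \<partial>lebesgue) = integral {r..T} (\<lambda>s. k s r)"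
    using measurable_Pair1[OF cut_kernel_measurable, of r] True
    by (intro lebesgue_integral_indicator_eq_integral[OF _ integrable_indicator_T[of "\<bar>C\<bar> * norm (g r)"]])
       (auto simp: eq norm_kernel_le)
  then show ?thesis using True by (simp add: eq)
qed (auto simp: cut_kernel_def triangle_def)

lemma triangle_Fubini:
  shows "(\<lambda>s. integral {0..s} (k s)) integrable_on {0..T}"
    and "integral {0..T} (\<lambda>s. integral {0..s} (k s)) = integral {0..T} (\<lambda>r. integral {r..T} (\<lambda>s. k s r))"
proof -
  have I1: "set_integrable lebesgue {0..T} (\<lambda>s. integral {0..s} (k s))"
    using lebesgue_pair.integrable_fst'[OF cut_kernel_integrable]
    by (simp add: set_integrable_def cut_kernel_section_fst)
  have I2: "set_integrable lebesgue {0..T} (\<lambda>r. integral {r..T} (\<lambda>s. k s r))"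
    using lebesgue_pair.integrable_snd[OF cut_kernel_integrable]
    by (simp add: set_integrable_def cut_kernel_section_snd)
  show "(\<lambda>s. integral {0..s} (k s)) integrable_on {0..T}"
    by (rule set_lebesgue_integral_eq_integral(1)[OF I1])
  have "integral {0..T} (\<lambda>s. integral {0..s} (k s)) = (\<integral>s. \<integral>r. cut_kernel s r \<partial>lebesgue \<partial>lebesgue)"
    by (simp add: set_lebesgue_integral_eq_integral(2)[OF I1, symmetric] set_lebesgue_integral_def
        cut_kernel_section_fst)
  also have "\<dots> = (\<integral>r. \<integral>s. cut_kernel s r \<partial>lebesgue \<partial>lebesgue)"
    using lebesgue_pair.Fubini_integral[OF cut_kernel_integrable] by simp
  also have "\<dots> = integral {0..T} (\<lambda>r. integral {r..T} (\<lambda>s. k s r))"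
    by (simp add: set_lebesgue_integral_eq_integral(2)[OF I2, symmetric] set_lebesgue_integral_def
        cut_kernel_section_snd)
  finally show "integral {0..T} (\<lambda>s. integral {0..s} (k s)) = integral {0..T} (\<lambda>r. integral {r..T} (\<lambda>s. k s r))" .
qed

end

section \<open>Variation of constants\<close>

definition integral_solution :: "('a::euclidean_space \<Rightarrow> 'a) \<Rightarrow> (real \<Rightarrow> 'a) \<Rightarrow> 'a \<Rightarrow> (real \<Rightarrow> 'a) \<Rightarrow> bool"
  where "integral_solution F g x0 x \<longleftrightarrow> (\<forall>t\<ge>0. ((\<lambda>s. F (x s) + g s) has_integral (x t - x0)) {0..t})"

definition duhamel :: "('a::euclidean_space \<Rightarrow> 'a) \<Rightarrow> (real \<Rightarrow> 'a) \<Rightarrow> 'a \<Rightarrow> real \<Rightarrow> 'a"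
  where "duhamel F g x0 t = lin_exp F t x0 + integral {0..t} (\<lambda>s. lin_exp F (t - s) (g s))"

lemma lin_exp_eq_sum_Basis:
  fixes F :: "'a::euclidean_space \<Rightarrow> 'a"
  assumes "bounded_linear F"
  shows "lin_exp F t v = (\<Sum>b\<in>Basis. (v \<bullet> b) *\<^sub>R lin_exp F t b)"
proof -
  have "lin_exp F t v = lin_exp F t (\<Sum>b\<in>Basis. (v \<bullet> b) *\<^sub>R b)"
    by (simp add: euclidean_representation)
  also have "\<dots> = (\<Sum>b\<in>Basis. (v \<bullet> b) *\<^sub>R lin_exp F t b)"
    using bounded_linear.linear[OF bounded_linear_lin_exp[OF assms]]
    by (simp add: linear_sum linear_scale)
  finally show ?thesis .
qed

lemma absolutely_integrable_lin_exp_convolution: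
  fixes F :: "'a::euclidean_space \<Rightarrow> 'a"
  assumes F: "bounded_linear F" and g: "g absolutely_integrable_on {lo..hi}"
  shows "(\<lambda>s. lin_exp F (t - s) (g s)) absolutely_integrable_on {lo..hi}"
proof -
  have bil: "bilinear (\<lambda>(x::'a) (y::real). y *\<^sub>R x)"
    by (simp add: bilinear_conv_bounded_bilinear bounded_bilinear.flip[OF bounded_bilinear_scaleR])
  have "(\<lambda>s. (g s \<bullet> b) *\<^sub>R lin_exp F (t - s) b) absolutely_integrable_on {lo..hi}" for b
  proof (rule absolutely_integrable_bounded_measurable_product[OF bil, of "\<lambda>s. lin_exp F (t - s) b"
        _ "\<lambda>s. g s \<bullet> b", simplified])
    have c: "continuous_on {lo..hi} (\<lambda>s. lin_exp F (t - s) b)"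
      by (rule continuous_on_compose2[OF continuous_on_lin_exp[OF F, of UNIV]])
         (auto intro!: continuous_intros)
    show "(\<lambda>s. lin_exp F (t - s) b) \<in> borel_measurable (lebesgue_on {lo..hi})"
      by (rule continuous_imp_measurable_on_sets_lebesgue[OF c]) auto
    show "bounded ((\<lambda>s. lin_exp F (t - s) b) ` {lo..hi})"
      by (rule compact_imp_bounded[OF compact_continuous_image[OF c]]) auto
    show "(\<lambda>s. g s \<bullet> b) absolutely_integrable_on {lo..hi}"
      by (rule absolutely_integrable_component[OF g])
  qed auto
  then have "(\<lambda>s. \<Sum>b\<in>Basis. (g s \<bullet> b) *\<^sub>R lin_exp F (t - s) b) absolutely_integrable_on {lo..hi}"
    by (intro absolutely_integrable_sum) auto
  then show ?thesis by (simp add: lin_exp_eq_sum_Basis[OF F, symmetric])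
qed

lemma measurable_lin_exp_kernel:
  fixes F :: "'a::euclidean_space \<Rightarrow> 'a"
  assumes F: "bounded_linear F" and g: "g absolutely_integrable_on {0..T}"
  shows "(\<lambda>p. indicator {0..T} (snd p) *\<^sub>R F (lin_exp F (fst p - snd p) (g (snd p))))
           \<in> borel_measurable (lebesgue \<Otimes>\<^sub>M lebesgue)"
proof -
  define gT where "gT r = indicator {0..T} r *\<^sub>R g r" for r
  have gT: "gT \<in> borel_measurable lebesgue"
    using g unfolding set_integrable_def gT_def by (rule borel_measurable_integrable)
  have phi: "(\<lambda>d. F (lin_exp F d b)) \<in> borel_measurable borel" for b
    by (intro borel_measurable_continuous_onI continuous_on_compose2[OF linear_continuous_on[OF F]
        continuous_on_lin_exp[OF F]]) auto
  have "indicator {0..T} (snd p) *\<^sub>R F (lin_exp F (fst p - snd p) (g (snd p)))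
      = (\<Sum>b\<in>Basis. (gT (snd p) \<bullet> b) *\<^sub>R F (lin_exp F (fst p - snd p) b))" for p
    using bounded_linear.linear[OF bounded_linear_lin_exp[OF F]] bounded_linear.linear[OF F]
    by (subst lin_exp_eq_sum_Basis[OF F])
       (simp add: gT_def linear_sum linear_scale inner_scaleR_left scaleR_sum_right)
  moreover have "(\<lambda>p. fst p - snd p) \<in> borel_measurable (lebesgue \<Otimes>\<^sub>M (lebesgue :: real measure))"
    by measurable
  ultimately show ?thesis
    by (simp only:) (intro borel_measurable_sum borel_measurable_scaleR borel_measurable_inner
        measurable_compose[OF measurable_snd gT] measurable_compose[OF _ phi] borel_measurable_const)
qed

text \<open>Exchanging the order of integration over the triangle \<open>0 \<le> r \<le> s \<le> t\<close> turns the inner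
  integral over \<open>s\<close> into the increment of \<open>s \<mapsto> lin_exp F (s - r) (g r)\<close> over \<open>[r, t]\<close>.\<close>
lemma has_integral_convolution_image:
  fixes F :: "'a::euclidean_space \<Rightarrow> 'a"
  assumes F: "bounded_linear F" and g: "\<And>t. t \<ge> 0 \<Longrightarrow> g absolutely_integrable_on {0..t}"
    and t: "0 \<le> t"
  shows "((\<lambda>s. F (integral {0..s} (\<lambda>r. lin_exp F (s - r) (g r)))) has_integral
           (integral {0..t} (\<lambda>r. lin_exp F (t - r) (g r)) - integral {0..t} g)) {0..t}"
proof -
  obtain K where K: "\<And>x. norm (F x) \<le> norm x * K" "0 \<le> K"
    using bounded_linear.nonneg_bounded[OF F] by blast
  define k where "k s r = F (lin_exp F (s - r) (g r))" for s r
  have conv_integrable: "(\<lambda>r. lin_exp F (s - r) (g r)) integrable_on {0..s}" if "0 \<le> s" for s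
    using absolutely_integrable_lin_exp_convolution[OF F g[OF that]]
    by (rule set_lebesgue_integral_eq_integral(1))
  have F_conv: "F (integral {0..s} (\<lambda>r. lin_exp F (s - r) (g r))) = integral {0..s} (k s)"
    if "0 \<le> s" for s
    using integral_linear[OF conv_integrable[OF that] F] by (simp add: k_def[abs_def] comp_def)
  have bound: "norm (k s r) \<le> (K * exp (t * K)) * norm (g r)" if "0 \<le> r" "r \<le> s" "s \<le> t" for s r
  proof -
    have "norm (k s r) \<le> norm (lin_exp F (s - r) (g r)) * K"
      unfolding k_def by (rule K(1))
    also have "\<dots> \<le> exp (\<bar>s - r\<bar> * K) * norm (g r) * K"
      by (intro mult_right_mono norm_lin_exp_le[OF K] K(2))
    also have "\<dots> \<le> exp (t * K) * norm (g r) * K"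
      using that K(2) by (intro mult_right_mono) (auto intro: mult_right_mono)
    finally show ?thesis by (simp add: mult_ac)
  qed
  have meas: "(\<lambda>p. indicator {0..t} (snd p) *\<^sub>R k (fst p) (snd p)) \<in> borel_measurable (lebesgue \<Otimes>\<^sub>M lebesgue)"
    unfolding k_def by (rule measurable_lin_exp_kernel[OF F g[OF t]])
  have inner: "integral {r..t} (\<lambda>s. k s r) = lin_exp F (t - r) (g r) - g r" if "r \<in> {0..t}" for r
    using has_integral_lin_exp[OF F, of r t "g r"] that
    by (intro integral_unique) (simp add: k_def lin_exp_commute[OF F])
  have "integral {0..t} (\<lambda>s. integral {0..s} (k s)) = integral {0..t} (\<lambda>r. integral {r..t} (\<lambda>s. k s r))"
    by (rule triangle_Fubini(2)[OF g[OF t] meas bound])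
  also have "\<dots> = integral {0..t} (\<lambda>r. lin_exp F (t - r) (g r) - g r)"
    by (rule integral_cong) (rule inner)
  also have "\<dots> = integral {0..t} (\<lambda>r. lin_exp F (t - r) (g r)) - integral {0..t} g"
    using conv_integrable[OF t] set_lebesgue_integral_eq_integral(1)[OF g[OF t]]
    by (rule integral_diff)
  finally have "((\<lambda>s. integral {0..s} (k s)) has_integral
      (integral {0..t} (\<lambda>r. lin_exp F (t - r) (g r)) - integral {0..t} g)) {0..t}"
    using integrable_integral[OF triangle_Fubini(1)[OF g[OF t] meas bound]] by simp
  then show ?thesis
    by (rule has_integral_eq[rotated]) (simp add: F_conv)
qed

lemma integral_solution_duhamel:
  fixes F :: "'a::euclidean_space \<Rightarrow> 'a"
  assumes F: "bounded_linear F" and g: "\<And>t. t \<ge> 0 \<Longrightarrow> g absolutely_integrable_on {0..t}"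
  shows "integral_solution F g x0 (duhamel F g x0)"
  unfolding integral_solution_def
proof (intro allI impI)
  fix t :: real assume t: "0 \<le> t"
  have "((\<lambda>s. lin_exp F (s - 0) (F x0) + F (integral {0..s} (\<lambda>r. lin_exp F (s - r) (g r))) + g s)
      has_integral (lin_exp F (t - 0) x0 - x0
        + (integral {0..t} (\<lambda>r. lin_exp F (t - r) (g r)) - integral {0..t} g) + integral {0..t} g)) {0..t}"
    by (intro has_integral_add has_integral_lin_exp has_integral_convolution_image F g t
        integrable_integral set_lebesgue_integral_eq_integral(1))
  then show "((\<lambda>s. F (duhamel F g x0 s) + g s) has_integral (duhamel F g x0 t - x0)) {0..t}"
    by (simp add: duhamel_def linear_simps(1)[OF F] lin_exp_commute[OF F] algebra_simps)
qed

lemma has_integral_power_over_fact: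
  fixes K M t :: real
  assumes "0 \<le> t"
  shows "((\<lambda>s. K * (M * (K * s) ^ n / fact n)) has_integral M * (K * t) ^ Suc n / fact (Suc n)) {0..t}"
proof -
  have "((\<lambda>s. M * (K * s) ^ Suc n / fact (Suc n)) has_real_derivative K * (M * (K * x) ^ n / fact n))
      (at x within {0..t})" for x
  proof -
    have "((\<lambda>s. M * (K * s) ^ Suc n / fact (Suc n)) has_real_derivative
        M * (real (Suc n) * (K * x) ^ n * K) / fact (Suc n)) (at x within {0..t})"
      by (auto intro!: derivative_eq_intros simp del: fact_Suc of_nat_Suc power_Suc)
    also have "M * (real (Suc n) * (K * x) ^ n * K) / fact (Suc n) = K * (M * (K * x) ^ n / fact n)"
      by (simp add: fact_Suc field_simps del: of_nat_Suc)
    finally show ?thesis .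
  qed
  then show ?thesis
    using fundamental_theorem_of_calculus[OF assms, of "\<lambda>s. M * (K * s) ^ Suc n / fact (Suc n)"]
    by (simp add: has_real_derivative_iff_has_vector_derivative)
qed

lemma homogeneous_integral_equation_zero:
  fixes F :: "'a::euclidean_space \<Rightarrow> 'a" and d :: "real \<Rightarrow> 'a"
  assumes F: "bounded_linear F" and d: "\<And>t. t \<ge> 0 \<Longrightarrow> ((\<lambda>s. F (d s)) has_integral d t) {0..t}"
    and T: "0 \<le> T"
  shows "d T = 0"
proof -
  obtain K where K: "\<And>x. norm (F x) \<le> norm x * K" "0 \<le> K"
    using bounded_linear.nonneg_bounded[OF F] by blast
  have int: "(\<lambda>s. F (d s)) integrable_on {0..T}" using d[OF T] by blast
  have d_eq: "d t = integral {0..t} (\<lambda>s. F (d s))" if "t \<in> {0..T}" for t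
    using d[of t] that by (simp add: integral_unique)
  have "continuous_on {0..T} d"
    by (rule continuous_on_eq[OF indefinite_integral_continuous_1[OF int]]) (simp add: d_eq)
  then have "bounded (d ` {0..T})"
    by (intro compact_imp_bounded compact_continuous_image compact_Icc)
  then obtain M where M: "\<forall>s\<in>{0..T}. norm (d s) \<le> M"
    by (auto simp: bounded_iff)
  have iterate: "norm (d t) \<le> M * (K * t) ^ n / fact n" if "t \<in> {0..T}" for n t
    using that
  proof (induction n arbitrary: t)
    case 0
    then show ?case using M by simp
  next
    case (Suc n)
    have sub: "{0..t} \<subseteq> {0..T}" using Suc.prems by auto
    have "norm (d t) = norm (integral {0..t} (\<lambda>s. F (d s)))" using Suc.prems by (simp add: d_eq)
    also have "\<dots> \<le> integral {0..t} (\<lambda>s. K * (M * (K * s) ^ n / fact n))"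
    proof (rule integral_norm_bound_integral)
      show "(\<lambda>s. F (d s)) integrable_on {0..t}" by (rule integrable_on_subinterval[OF int sub])
      show "(\<lambda>s. K * (M * (K * s) ^ n / fact n)) integrable_on {0..t}"
        using has_integral_power_over_fact[of t K M n] Suc.prems by (auto simp del: fact_Suc)
      fix s assume "s \<in> {0..t}"
      then have "norm (d s) * K \<le> (M * (K * s) ^ n / fact n) * K"
        using Suc.IH sub K(2) by (intro mult_right_mono) auto
      then show "norm (F (d s)) \<le> K * (M * (K * s) ^ n / fact n)"
        using K(1)[of "d s"] by (simp add: mult.commute)
    qed
    also have "\<dots> = M * (K * t) ^ Suc n / fact (Suc n)"
      using integral_unique[OF has_integral_power_over_fact[of t K M n]] Suc.prems by simp
    finally show ?case .
  qed
  have "(\<lambda>n. M * ((K * T) ^ n / fact n)) \<longlonglongrightarrow> M * 0"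
    using summable_LIMSEQ_zero[OF summable_exp[of "K * T"]] by (intro tendsto_mult_left) (simp add: field_simps)
  then have "norm (d T) \<le> 0"
    using iterate[of T] T by (intro LIMSEQ_le_const) auto
  then show ?thesis by simp
qed

lemma integral_solution_iff_duhamel:
  fixes F :: "'a::euclidean_space \<Rightarrow> 'a"
  assumes F: "bounded_linear F" and g: "\<And>t. t \<ge> 0 \<Longrightarrow> g absolutely_integrable_on {0..t}"
  shows "integral_solution F g x0 x \<longleftrightarrow> (\<forall>t\<ge>0. x t = duhamel F g x0 t)"
proof
  have sol: "integral_solution F g x0 (duhamel F g x0)"
    by (rule integral_solution_duhamel[OF F g])
  assume x: "integral_solution F g x0 x"
  have diff: "((\<lambda>s. F (x s - duhamel F g x0 s)) has_integral (x t - duhamel F g x0 t)) {0..t}"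
    if "0 \<le> t" for t
    using has_integral_diff[OF x[unfolded integral_solution_def, rule_format, OF that]
        sol[unfolded integral_solution_def, rule_format, OF that]]
    by (simp add: linear_simps(2)[OF F])
  show "\<forall>t\<ge>0. x t = duhamel F g x0 t"
    using homogeneous_integral_equation_zero[OF F diff] by auto
next
  assume eq: "\<forall>t\<ge>0. x t = duhamel F g x0 t"
  have "((\<lambda>s. F (x s) + g s) has_integral (x t - x0)) {0..t}" if t: "0 \<le> t" for t
  proof -
    have "((\<lambda>s. F (duhamel F g x0 s) + g s) has_integral (duhamel F g x0 t - x0)) {0..t}"
      using integral_solution_duhamel[OF F g] t by (simp add: integral_solution_def)
    then have "((\<lambda>s. F (x s) + g s) has_integral (duhamel F g x0 t - x0)) {0..t}"
      by (rule has_integral_eq[rotated]) (simp add: eq)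
    then show ?thesis using eq t by simp
  qed
  then show "integral_solution F g x0 x"
    by (simp add: integral_solution_def)
qed

lemma duhamel_iff_has_integral:
  fixes F :: "'a::euclidean_space \<Rightarrow> 'a"
  assumes F: "bounded_linear F" and g: "\<And>t. t \<ge> 0 \<Longrightarrow> g absolutely_integrable_on {0..t}"
  shows "(\<forall>t\<ge>0. x t = duhamel F g x0 t) \<longleftrightarrow>
    (\<forall>t\<ge>0. ((\<lambda>s. lin_exp F (t - s) (g s)) has_integral (x t - lin_exp F t x0)) {0..t})"
  using set_lebesgue_integral_eq_integral(1)[OF absolutely_integrable_lin_exp_convolution[OF F g]]
  by (auto simp: duhamel_def has_integral_integral integral_unique)

section \<open>Bimatrices and their complex lifting\<close>

lemma bounded_linear_vconj: "bounded_linear vconj"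
  by (simp add: linear_conv_bounded_linear[symmetric] linearI vconj_def vec_eq_iff complex_cnj_scaleR)

lemma bounded_linear_bimat: "bounded_linear (bimat A1 A2)"
  unfolding bimat_def
  by (intro bounded_linear_add bounded_linear_compose[OF matrix_vector_mul_bounded_linear bounded_linear_vconj]
      matrix_vector_mul_bounded_linear)

lemma bimat_add_matrices: "bimat (P1 + Q1) (P2 + Q2) x = bimat P1 P2 x + bimat Q1 Q2 x"
  by (simp add: bimat_def mconj_def vec_eq_iff matrix_vector_mult_def sum.distrib algebra_simps)

lemma bimat_scaleR_matrices: "bimat (c *\<^sub>R P1) (c *\<^sub>R P2) x = c *\<^sub>R bimat P1 P2 x"
  by (simp add: bimat_def mconj_def vec_eq_iff matrix_vector_mult_def scaleR_sum_right complex_cnj_scaleR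
      scaleR_add_right)

lemma bounded_linear_matrix_mult_left:
  "bounded_linear (\<lambda>N :: complex^'k^'k. M ** N)"
proof -
  have "linear (\<lambda>N :: complex^'k^'k. M ** N)"
    by (rule linearI) (simp_all add: vec_eq_iff matrix_matrix_mult_def distrib_left sum.distrib scaleR_sum_right)
  then show ?thesis by (simp add: linear_conv_bounded_linear)
qed

lemma summable_matexp_series: "summable (\<lambda>i. (t ^ i / fact i) *\<^sub>R matpow (M :: complex^'k^'k) i)"
  using summable_lin_exp_series[OF bounded_linear_matrix_mult_left] by (simp add: matpow_def)

lemma biexp_eq_lin_exp: "biexp t A1 A2 = lin_exp (bimat A1 A2) t"
  by (simp add: biexp_def bipow_def lin_exp_def fun_eq_iff)

lemma csol_eq_integral_solution:
  "csol A1 A2 B1 B2 x0 u = integral_solution (bimat A1 A2) (\<lambda>s. bimat B1 B2 (u s)) x0"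
  by (simp add: fun_eq_iff csol_def integral_solution_def)

definition stack_conj :: "complex^'n::finite \<Rightarrow> complex^('n + 'n)" where
  "stack_conj v = (\<chi> r. case r of Inl i \<Rightarrow> v $ i | Inr i \<Rightarrow> cnj (v $ i))"

definition lifted :: "complex^('n::finite + 'n)^('n + 'n) \<Rightarrow> bool" where
  "lifted M \<longleftrightarrow> (\<forall>a b. M $ Inl a $ Inr b = cnj (M $ Inr a $ Inl b) \<and> M $ Inr a $ Inr b = cnj (M $ Inl a $ Inl b))"

lemma sum_UNIV_Plus:
  "(\<Sum>c\<in>(UNIV :: ('a::finite + 'b::finite) set). f c) = (\<Sum>j\<in>UNIV. f (Inl j)) + (\<Sum>j\<in>UNIV. f (Inr j))"
  by (simp add: UNIV_Plus_UNIV[symmetric] sum.Plus del: UNIV_Plus_UNIV)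

lemma lifted_mult_stack_conj:
  assumes "lifted M"
  shows "M *v stack_conj v = stack_conj (bimat (blk1 M) (blk2 M) v)"
proof -
  have "(M *v stack_conj v) $ r = stack_conj (bimat (blk1 M) (blk2 M) v) $ r" for r
    using assms
    by (cases r) (simp_all add: matrix_vector_mult_def sum_UNIV_Plus stack_conj_def bimat_def blk1_def blk2_def
        mconj_def vconj_def lifted_def cnj_sum add.commute)
  then show ?thesis by (simp add: vec_eq_iff)
qed

lemma stack_conj_inject: "stack_conj v = stack_conj w \<Longrightarrow> v = w"
  by (auto simp: stack_conj_def vec_eq_iff dest: spec[of _ "Inl _"])

lemma lifted_lift: "lifted (lift A1 A2)"
  by (simp add: lifted_def lift_def)

lemma blk_lift: "blk1 (lift A1 A2) = A1" "blk2 (lift A1 A2) = A2"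
  by (simp_all add: blk1_def blk2_def lift_def vec_eq_iff)

lemma lifted_mat_1: "lifted (mat 1)"
  by (simp add: lifted_def mat_def)

lemma lifted_mult: "lifted M \<Longrightarrow> lifted N \<Longrightarrow> lifted (M ** N)"
  by (simp add: lifted_def matrix_matrix_mult_def sum_UNIV_Plus cnj_sum add.commute)

lemma lifted_matpow: "lifted (matpow (lift A1 A2) i)"
  by (induction i) (simp_all add: matpow_def lifted_mat_1 lifted_mult lifted_lift)

lemma matpow_lift_mult_stack_conj: "matpow (lift A1 A2) i *v stack_conj v = stack_conj (bipow A1 A2 i v)"
proof (induction i)
  case 0
  have "blk1 (mat 1 :: complex^('n::finite + 'n)^('n + 'n)) = mat 1"
    "blk2 (mat 1 :: complex^('n + 'n)^('n + 'n)) = 0"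
    by (simp_all add: blk1_def blk2_def mat_def vec_eq_iff)
  then show ?case
    using lifted_mult_stack_conj[OF lifted_mat_1, of v]
    by (simp add: matpow_def bipow_def bimat_def mconj_def)
next
  case (Suc i)
  have "matpow (lift A1 A2) (Suc i) *v stack_conj v = lift A1 A2 *v (matpow (lift A1 A2) i *v stack_conj v)"
    by (simp add: matpow_def matrix_vector_mul_assoc)
  also have "\<dots> = stack_conj (bimat A1 A2 (bipow A1 A2 i v))"
    using lifted_mult_stack_conj[OF lifted_lift, of A1 A2] by (simp add: Suc blk_lift)
  finally show ?case by (simp add: bipow_def)
qed

lemma bimat_blocks_matpow_lift:
  "bimat (blk1 (matpow (lift A1 A2) i)) (blk2 (matpow (lift A1 A2) i)) w = bipow A1 A2 i w"
  by (rule stack_conj_inject)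
     (simp add: lifted_mult_stack_conj[OF lifted_matpow, symmetric] matpow_lift_mult_stack_conj)

lemma bimat_PhiD: "bimat (PhiD1 A1 A2 t) (PhiD2 A1 A2 t) w = bipow A1 A2 t w"
  by (simp add: PhiD1_def PhiD2_def bimat_blocks_matpow_lift)

lemma bounded_linear_bimat_blocks:
  "bounded_linear (\<lambda>M :: complex^('n::finite + 'n)^('n + 'n). bimat (blk1 M) (blk2 M) w)"
proof -
  have "blk1 (M + N) = blk1 M + blk1 N" "blk2 (M + N) = blk2 M + blk2 N"
    "blk1 (c *\<^sub>R M) = c *\<^sub>R blk1 M" "blk2 (c *\<^sub>R M) = c *\<^sub>R blk2 M"
    for M N :: "complex^('n + 'n)^('n + 'n)" and c
    by (simp_all add: blk1_def blk2_def vec_eq_iff)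
  then show ?thesis
    by (simp add: linear_conv_bounded_linear[symmetric] linearI bimat_add_matrices bimat_scaleR_matrices)
qed

lemma bimat_PhiC: "bimat (PhiC1 A1 A2 t) (PhiC2 A1 A2 t) w = biexp t A1 A2 w"
proof -
  have "bimat (PhiC1 A1 A2 t) (PhiC2 A1 A2 t) w
      = (\<Sum>i. bimat (blk1 ((t ^ i / fact i) *\<^sub>R matpow (lift A1 A2) i))
                   (blk2 ((t ^ i / fact i) *\<^sub>R matpow (lift A1 A2) i)) w)"
    unfolding PhiC1_def PhiC2_def matexp_def
    by (rule bounded_linear.suminf[OF bounded_linear_bimat_blocks summable_matexp_series])
  also have "\<dots> = (\<Sum>i. (t ^ i / fact i) *\<^sub>R bipow A1 A2 i w)"
    by (simp only: linear_simps(5)[OF bounded_linear_bimat_blocks] bimat_blocks_matpow_lift)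
  finally show ?thesis by (simp add: biexp_def)
qed

lemma linear_recurrence_iff:
  fixes F :: "'a::real_vector \<Rightarrow> 'a"
  assumes "linear F"
  shows "(x 0 = x0 \<and> (\<forall>t. x (Suc t) = F (x t) + g t)) \<longleftrightarrow>
    (\<forall>t. x t = (F ^^ t) x0 + (\<Sum>i<t. (F ^^ (t - 1 - i)) (g i)))"
proof -
  define y where "y t = (F ^^ t) x0 + (\<Sum>i<t. (F ^^ (t - 1 - i)) (g i))" for t
  have y_Suc: "y (Suc t) = F (y t) + g t" for t
  proof -
    have "(\<Sum>i<t. (F ^^ (Suc t - 1 - i)) (g i)) = (\<Sum>i<t. F ((F ^^ (t - 1 - i)) (g i)))"
    proof (intro sum.cong refl)
      fix i assume "i \<in> {..<t}"
      then have "Suc t - 1 - i = Suc (t - 1 - i)" by auto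
      then show "(F ^^ (Suc t - 1 - i)) (g i) = F ((F ^^ (t - 1 - i)) (g i))" by simp
    qed
    then show ?thesis
      by (simp add: y_def linear_add[OF assms] linear_sum[OF assms])
  qed
  have "(x 0 = x0 \<and> (\<forall>t. x (Suc t) = F (x t) + g t)) \<longleftrightarrow> (\<forall>t. x t = y t)"
  proof
    assume "x 0 = x0 \<and> (\<forall>t. x (Suc t) = F (x t) + g t)"
    then show "\<forall>t. x t = y t"
      by (intro allI, induct_tac t) (simp_all add: y_def[of 0] y_Suc)
  qed (simp add: y_def[of 0] y_Suc)
  then show ?thesis by (simp add: y_def)
qed

lemma dsol_iff_closed_form:
  "dsol A1 A2 B1 B2 x0 u x \<longleftrightarrow>
    (\<forall>t. x t = bipow A1 A2 t x0 + (\<Sum>i<t. bipow A1 A2 (t - 1 - i) (bimat B1 B2 (u i))))"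
  using linear_recurrence_iff[OF bounded_linear.linear[OF bounded_linear_bimat]]
  by (simp add: dsol_def bipow_def)

theorem theorem1:
  fixes A1 A2 :: "complex ^ 'n ^ 'n" and B1 B2 :: "complex ^ 'm ^ 'n"
    and x0 :: "complex ^ 'n"
  shows
   "(\<forall>u :: real \<Rightarrow> complex ^ 'm. (\<forall>t\<ge>0. u absolutely_integrable_on {0..t}) \<longrightarrow>
      (\<exists>x. csol A1 A2 B1 B2 x0 u x) \<and>
      (\<forall>x. csol A1 A2 B1 B2 x0 u x \<longleftrightarrow>
         (\<forall>t\<ge>0. ((\<lambda>s. biexp (t - s) A1 A2 (bimat B1 B2 (u s)))
                     has_integral (x t - biexp t A1 A2 x0)) {0..t})) \<and>
      (\<forall>x. csol A1 A2 B1 B2 x0 u x \<longleftrightarrow>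
         (\<forall>t\<ge>0. ((\<lambda>s. bimat (PhiC1 A1 A2 (t - s)) (PhiC2 A1 A2 (t - s)) (bimat B1 B2 (u s)))
                     has_integral (x t - bimat (PhiC1 A1 A2 t) (PhiC2 A1 A2 t) x0)) {0..t})))
    \<and>
    (\<forall>u :: nat \<Rightarrow> complex ^ 'm.
      (\<exists>x. dsol A1 A2 B1 B2 x0 u x) \<and>
      (\<forall>x. dsol A1 A2 B1 B2 x0 u x \<longleftrightarrow>
         x 0 = x0 \<and>
         (\<forall>t\<ge>1. x t = bipow A1 A2 t x0 +
             (\<Sum>i<t. bipow A1 A2 (t - 1 - i) (bimat B1 B2 (u i))))) \<and>
      (\<forall>x. dsol A1 A2 B1 B2 x0 u x \<longleftrightarrow>
         x 0 = x0 \<and>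
         (\<forall>t\<ge>1. x t = bimat (PhiD1 A1 A2 t) (PhiD2 A1 A2 t) x0 +
             (\<Sum>i<t. bimat (PhiD1 A1 A2 (t - 1 - i)) (PhiD2 A1 A2 (t - 1 - i)) (bimat B1 B2 (u i))))))"
proof (intro conjI allI impI)
  fix u :: "real \<Rightarrow> complex ^ 'm"
  assume u: "\<forall>t\<ge>0. u absolutely_integrable_on {0..t}"
  have g: "(\<lambda>s. bimat B1 B2 (u s)) absolutely_integrable_on {0..t}" if "0 \<le> t" for t
    using absolutely_integrable_linear[OF u[rule_format, OF that] bounded_linear_bimat] by (simp add: o_def)
  note solution_iff = integral_solution_iff_duhamel[OF bounded_linear_bimat g]
  note duhamel_iff = duhamel_iff_has_integral[OF bounded_linear_bimat g]
  show "\<exists>x. csol A1 A2 B1 B2 x0 u x"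
    unfolding csol_eq_integral_solution using integral_solution_duhamel[OF bounded_linear_bimat g] by blast
  fix x
  show "csol A1 A2 B1 B2 x0 u x \<longleftrightarrow>
         (\<forall>t\<ge>0. ((\<lambda>s. biexp (t - s) A1 A2 (bimat B1 B2 (u s)))
                     has_integral (x t - biexp t A1 A2 x0)) {0..t})"
    by (simp add: csol_eq_integral_solution solution_iff duhamel_iff biexp_eq_lin_exp)
  show "csol A1 A2 B1 B2 x0 u x \<longleftrightarrow>
         (\<forall>t\<ge>0. ((\<lambda>s. bimat (PhiC1 A1 A2 (t - s)) (PhiC2 A1 A2 (t - s)) (bimat B1 B2 (u s)))
                     has_integral (x t - bimat (PhiC1 A1 A2 t) (PhiC2 A1 A2 t) x0)) {0..t})"
    by (simp add: csol_eq_integral_solution solution_iff duhamel_iff bimat_PhiC biexp_eq_lin_exp)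
next
  fix u :: "nat \<Rightarrow> complex ^ 'm"
  have all_nat: "(\<forall>t::nat. P t) \<longleftrightarrow> P 0 \<and> (\<forall>t\<ge>1. P t)" for P
    by (metis less_one not_le)
  show "\<exists>x. dsol A1 A2 B1 B2 x0 u x"
    unfolding dsol_iff_closed_form by (rule exI[of _ "\<lambda>t. _ t"], rule allI, rule refl)
  fix x
  show "dsol A1 A2 B1 B2 x0 u x \<longleftrightarrow> x 0 = x0 \<and>
      (\<forall>t\<ge>1. x t = bipow A1 A2 t x0 + (\<Sum>i<t. bipow A1 A2 (t - 1 - i) (bimat B1 B2 (u i))))"
    unfolding dsol_iff_closed_form all_nat[where P = "\<lambda>t. x t = _ t"] by (simp add: bipow_def)
  then show "dsol A1 A2 B1 B2 x0 u x \<longleftrightarrow> x 0 = x0 \<and>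
      (\<forall>t\<ge>1. x t = bimat (PhiD1 A1 A2 t) (PhiD2 A1 A2 t) x0 +
        (\<Sum>i<t. bimat (PhiD1 A1 A2 (t - 1 - i)) (PhiD2 A1 A2 (t - 1 - i)) (bimat B1 B2 (u i))))"
    by (simp add: bimat_PhiD)
qed

end
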